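(* Let $q$ be a power of an odd prime, let $E$ be an elliptic curve over $\mathbb{F}_q$ with a rational point $O$, and let $D\subset E(\mathbb{F}_q)\setminus\{O\}$ be a set of rational points with $n=|D|$. For an integer $k$ with $2\leq k\leq n-2$, let $C$ be either $C_{\Omega}(D,kO)$ or $C_{\mathcal{L}}(D,kO)$. Then the covering radius of $C$ equals either $n-\dim(C)-1$ or $n-\dim(C)$.
   Context: An elliptic curve $E$ over $\mathbb{F}_q$ is a geometrically irreducible smooth projective curve of genus $1$; $E(\mathbb{F}_q)$ denotes its rational points. For a divisor $V$, $\mathcal{L}(V)=\{f\in\mathbb{F}_q(E)^*:\mathrm{div}(f)\geq -V\}\cup\{0\}$ and $\Omega(V)$ is the space of Weil differentials $\omega$ with $\mathrm{div}(\omega)\geq V$, together with $0$. For $D=\{P_1,\dots,P_n\}\subset E(\mathbb{F}_q)$ (also viewed as the divisor $P_1+\dots+P_n$) and a divisor $G$ with support disjoint from $D$: $C_{\mathcal{L}}(D,G)=\{(f(P_1),\dots,f(P_n)):f\in\mathcal{L}(G)\}$ and $C_{\Omega}(D,G)=\{(\mathrm{res}_{P_1}(\omega),\dots,\mathrm{res}_{P_n}(\omega)):\omega\in\Omega(G-D)\}$; these two codes are dual to each other. The covering radius of a linear code $C\subseteq\mathbb{F}_q^n$ is $\rho(C)=\max_{u\in\mathbb{F}_q^n}\min_{c\in C}d(u,c)$, where $d$ is the Hamming distance. *)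

theory Defs
  imports "HOL-Analysis.Analysis"
begin

text \<open>Elliptic curves are given by a (general) Weierstrass equation
  y^2 + a1 x y + a3 y = x^3 + a2 x^2 + a4 x + a6 with nonzero discriminant;
  the distinguished rational point O is the point at infinity. Every elliptic
  curve E over F_q with a rational point O has such a model with O at infinity.\<close>

record 'a weierstrass =
  wa1 :: 'a
  wa2 :: 'a
  wa3 :: 'a
  wa4 :: 'a
  wa6 :: 'a

definition discr :: "'a::comm_ring_1 weierstrass \<Rightarrow> 'a" where
  "discr W = (let a1 = wa1 W; a2 = wa2 W; a3 = wa3 W; a4 = wa4 W; a6 = wa6 W;
      b2 = a1^2 + 4*a2; b4 = 2*a4 + a1*a3; b6 = a3^2 + 4*a6;
      b8 = a1^2*a6 + 4*a2*a6 - a1*a3*a4 + a2*a3^2 - a4^2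
    in - (b2^2*b8) - 8*b4^3 - 27*b6^2 + 9*b2*b4*b6)"

definition elliptic :: "'a::field weierstrass \<Rightarrow> bool" where
  "elliptic W \<longleftrightarrow> discr W \<noteq> 0"

text \<open>Affine rational points, i.e. rational points of E other than O.\<close>
definition on_curve :: "'a::comm_ring_1 weierstrass \<Rightarrow> 'a \<times> 'a \<Rightarrow> bool" where
  "on_curve W P \<longleftrightarrow> (case P of (x, y) \<Rightarrow>
     y^2 + wa1 W * x * y + wa3 W * y = x^3 + wa2 W * x^2 + wa4 W * x + wa6 W)"

text \<open>Monomials x^i y^j (j \<le> 1) with pole order 2i+3j \<le> k at O: a basis of L(kO).\<close>
definition LkO_monomials :: "nat \<Rightarrow> (nat \<times> nat) set" where
  "LkO_monomials k = {(i, j). j \<le> 1 \<and> 2*i + 3*j \<le> k}"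

text \<open>The evaluation code C_L(D, kO), D given as an injective enumeration P of its points.\<close>
definition code_L :: "('n::finite \<Rightarrow> 'a::field \<times> 'a) \<Rightarrow> nat \<Rightarrow> ('a ^ 'n) set" where
  "code_L P k = {(\<chi> i. \<Sum>(a, b)\<in>LkO_monomials k. c (a, b) * fst (P i) ^ a * snd (P i) ^ b)
                  | c. True}"

definition dot :: "'a::comm_ring_1 ^ 'n::finite \<Rightarrow> 'a ^ 'n \<Rightarrow> 'a" where
  "dot u v = (\<Sum>i\<in>UNIV. u $ i * v $ i)"

definition dual_code :: "('a::field ^ 'n::finite) set \<Rightarrow> ('a ^ 'n) set" where
  "dual_code C = {u. \<forall>c\<in>C. dot u c = 0}"

text \<open>The residue code C_Omega(D, kO), realised as the dual of C_L(D, kO).\<close>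
definition code_Omega :: "('n::finite \<Rightarrow> 'a::field \<times> 'a) \<Rightarrow> nat \<Rightarrow> ('a ^ 'n) set" where
  "code_Omega P k = dual_code (code_L P k)"

definition hamming :: "'a ^ 'n::finite \<Rightarrow> 'a ^ 'n \<Rightarrow> nat" where
  "hamming u v = card {i. u $ i \<noteq> v $ i}"

definition covering_radius :: "('a::finite ^ 'n::finite) set \<Rightarrow> nat" where
  "covering_radius C = Max (range (\<lambda>u. Min ((hamming u) ` C)))"

end

theory Submission
  imports Defs "HOL-Computational_Algebra.Polynomial"
begin

text \<open>A function with poles only at O is A(x) + B(x) y, and its norm (the product with its conjugate
  under P \<mapsto> -P) is a polynomial in x whose degree is the pole order and which vanishes at the
  x-coordinates of the zeros. So a nonzero f \<in> L(kO) has at most k zeros: this gives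
  dim C_L(D, kO) = k, and the word of a monomial of pole order k + 1 is at distance at least
  n - k - 1 from C_L(D, kO). Sharper, dim L((m+1)O - Z) \<le> 1 for |Z| = m: otherwise it would contain
  f0, f1 of pole orders m and m + 1, and f1 / f0 would be regular with a single simple pole at O,
  impossible in genus 1 (nonsingularity enters at the 2-torsion points). Counting dimensions, a
  nonzero word orthogonal to C_L(D, jO) then has weight at least j, so a word dual to the top
  monomial of L(kO) is at distance at least k - 1 from C_Omega(D, kO). With the redundancy bound
  rho(C) \<le> n - dim C only n - dim C - 1 and n - dim C remain.\<close>

lemma linear_power_mult_dvd:
  fixes p :: "'a::field poly"
  assumes "[:-x, 1:] ^ e dvd p" "q dvd p" "poly q x \<noteq> 0"
  shows "[:-x, 1:] ^ e * q dvd p"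
proof (cases "p = 0")
  case False
  obtain r where r: "p = q * r" using assms(2) by blast
  with False have "order x p = order x q + order x r" by (simp add: order_mult)
  moreover have "order x q = 0" using assms(3) by (simp add: order_root)
  ultimately have "[:-x, 1:] ^ e dvd r" using assms(1) False r by (simp add: order_divides)
  then show ?thesis using r by (simp add: mult.commute mult_dvd_mono)
qed simp

lemma prod_linear_powers_dvd:
  fixes p :: "'a::field poly"
  assumes "finite X" "\<forall>x\<in>X. [:-x, 1:] ^ e x dvd p"
  shows "(\<Prod>x\<in>X. [:-x, 1:] ^ e x) dvd p"
  using assms
proof (induction X rule: finite_induct)
  case (insert x X)
  then have "[:-x, 1:] ^ e x * (\<Prod>x\<in>X. [:-x, 1:] ^ e x) dvd p"
    by (intro linear_power_mult_dvd) (auto simp: poly_prod)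
  then show ?case using insert.hyps by simp
qed simp

lemma poly_pderiv_eq_0_if_square_dvd:
  fixes p :: "'a::field poly"
  assumes "[:-x, 1:]^2 dvd p"
  shows "poly (pderiv p) x = 0"
proof -
  obtain r where "p = [:-x, 1:]^2 * r" using assms by blast
  moreover have "poly (pderiv (q^2 * r)) x = 0" if "poly q x = 0" for q
    using that by (simp add: pderiv_mult power2_eq_square)
  ultimately show ?thesis by simp
qed

lemma dvd_if_dvd_degree_ge:
  fixes p q :: "'a::field poly"
  assumes "p dvd q" "q \<noteq> 0" "degree q \<le> degree p"
  shows "q dvd p"
proof -
  obtain r where r: "q = p * r" using assms(1) by blast
  then have "degree r = 0" using assms(2,3) by (simp add: degree_mult_eq)
  then obtain c where "r = [:c:]" "c \<noteq> 0" using r assms(2) by (metis degree_eq_zeroE mult_zero_right pCons_0_0)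
  then have "p = q * [:inverse c:]" using r by (simp add: mult.assoc)
  then show ?thesis by (simp only: dvd_triv_left)
qed

section \<open>Linear algebra in the coordinate space\<close>

lemma subspace_common_kernel:
  fixes U :: "('a::field ^ 'n) set"
  assumes "vec.subspace U"
    and "\<And>s x y. s \<in> S \<Longrightarrow> \<phi> s (x + y) = \<phi> s x + \<phi> s y"
    and "\<And>s c x. s \<in> S \<Longrightarrow> \<phi> s (c *s x) = c * \<phi> s x"
  shows "vec.subspace {u\<in>U. \<forall>s\<in>S. \<phi> s u = 0}"
proof -
  have "\<phi> s 0 = 0" if "s \<in> S" for s
    using assms(3)[OF that, of 0 0] by simp
  then show ?thesis using assms by (auto simp: vec.subspace_def)
qed

lemma dim_le_dim_kernel_plus_1:
  fixes U :: "('a::field ^ 'n) set"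
  assumes U: "vec.subspace U"
    and add: "\<And>x y. \<phi> (x + y) = \<phi> x + \<phi> y"
    and scale: "\<And>c x. \<phi> (c *s x) = c * \<phi> x"
  shows "vec.dim U \<le> vec.dim {u\<in>U. \<phi> u = 0} + 1"
proof (cases "\<forall>u\<in>U. \<phi> u = 0")
  case True
  then have "{u\<in>U. \<phi> u = 0} = U" by auto
  then show ?thesis by simp
next
  case False
  then obtain c where c: "c \<in> U" "\<phi> c \<noteq> 0" by auto
  define U0 where "U0 = {u\<in>U. \<phi> u = 0}"
  have "U \<subseteq> vec.span (insert c U0)"
  proof
    fix u assume u: "u \<in> U"
    define a where "a = \<phi> u / \<phi> c"
    have "\<phi> (u + (- a) *s c) = 0" using c by (simp only: add scale) (simp add: a_def)
    then have "u - a *s c \<in> U0"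
      using U u c by (simp add: U0_def vec.subspace_diff vec.subspace_scale vec.scale_minus_left)
    then show "u \<in> vec.span (insert c U0)"
      by (auto simp: vec.span_breakdown_eq intro: vec.span_base)
  qed
  then have "vec.dim U \<le> vec.dim (insert c U0)"
    using vec.dim_subset vec.dim_span by metis
  also have "\<dots> \<le> vec.dim U0 + 1" by (simp add: vec.dim_insert)
  finally show ?thesis by (simp add: U0_def)
qed

lemma dim_le_dim_common_kernel:
  fixes U :: "('a::field ^ 'n) set"
  assumes U: "vec.subspace U" and "finite S"
    and add: "\<And>s x y. \<phi> s (x + y) = \<phi> s x + \<phi> s y"
    and scale: "\<And>s c x. \<phi> s (c *s x) = c * \<phi> s x"
  shows "vec.dim U \<le> vec.dim {u\<in>U. \<forall>s\<in>S. \<phi> s u = 0} + card S"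
  using \<open>finite S\<close>
proof (induction S rule: finite_induct)
  case (insert s S)
  define US where "US = {u\<in>U. \<forall>s\<in>S. \<phi> s u = 0}"
  have "vec.subspace US" unfolding US_def by (rule subspace_common_kernel[OF U add scale])
  then have "vec.dim US \<le> vec.dim {u\<in>US. \<phi> s u = 0} + 1"
    by (rule dim_le_dim_kernel_plus_1[OF _ add scale])
  moreover have "{u\<in>U. \<forall>t\<in>insert s S. \<phi> t u = 0} = {u\<in>US. \<phi> s u = 0}"
    by (auto simp: US_def)
  ultimately show ?case using insert US_def by simp
qed simp

lemma dim_le_dim_vanishing_coords:
  fixes U :: "('a::field ^ 'n) set"
  assumes "vec.subspace U" "finite S"
  shows "vec.dim U \<le> vec.dim {u\<in>U. \<forall>s\<in>S. u $ s = 0} + card S"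
  by (rule dim_le_dim_common_kernel[OF assms]) auto

lemma card_le_dim_orthogonal:
  fixes S :: "('a::field ^ 'n) set"
  assumes "finite S"
  shows "CARD('n) \<le> vec.dim {u. \<forall>s\<in>S. dot u s = 0} + card S"
proof -
  have "vec.dim (UNIV :: ('a ^ 'n) set) \<le> vec.dim {u\<in>UNIV. \<forall>s\<in>S. dot u s = 0} + card S"
    by (rule dim_le_dim_common_kernel[OF vec.subspace_UNIV assms])
      (auto simp: dot_def sum.distrib algebra_simps sum_distrib_left)
  then show ?thesis by (simp only: vec_dim_card simp_thms Collect_mem_eq mem_Collect_eq UNIV_I)
qed

lemma exists_information_set:
  fixes C :: "('a::field ^ 'n) set"
  assumes "vec.subspace C"
  shows "\<exists>I. vec.dim C \<le> card I \<and> (\<forall>t. \<exists>c\<in>C. \<forall>i\<in>I. c $ i = t $ i)"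
  using assms
proof (induction "vec.dim C" arbitrary: C rule: less_induct)
  case less
  show ?case
  proof (cases "C \<subseteq> {0}")
    case True
    then have "vec.dim C = 0" using vec.dim_subset[OF True] by simp
    then show ?thesis using less.prems vec.subspace_0 by (intro exI[of _ "{}"]) auto
  next
    case False
    then obtain c where "c \<in> C" "c \<noteq> 0" by auto
    then obtain i where c: "c \<in> C" "c $ i \<noteq> 0" by (auto simp: vec_eq_iff)
    define C' where "C' = {u\<in>C. \<forall>s\<in>{i}. u $ s = 0}"
    have C': "vec.subspace C'" unfolding C'_def
      by (rule subspace_common_kernel[OF less.prems]) auto
    have dim_C: "vec.dim C \<le> vec.dim C' + 1"
      using dim_le_dim_vanishing_coords[OF less.prems, of "{i}"] by (simp add: C'_def)
    have "C' \<subset> C" using c by (auto simp: C'_def)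
    then have "vec.dim C' < vec.dim C"
      using vec.dim_psubset C' less.prems by (metis vec.span_eq_iff)
    from less.hyps[OF this C'] obtain I where
      I: "vec.dim C' \<le> card I" "\<forall>t. \<exists>c\<in>C'. \<forall>i\<in>I. c $ i = t $ i" by blast
    have "i \<notin> I"
      using I(2)[rule_format, of "\<chi> j. 1"] by (force simp: C'_def)
    show ?thesis
    proof (intro exI[of _ "insert i I"] conjI allI)
      show "vec.dim C \<le> card (insert i I)" using dim_C I(1) \<open>i \<notin> I\<close> by simp
    next
      fix t :: "'a ^ 'n"
      define a where "a = t $ i / c $ i"
      obtain c' where c': "c' \<in> C'" "\<forall>j\<in>I. c' $ j = (t - a *s c) $ j" using I(2) by blast
      have "c' + a *s c \<in> C" using c' c less.prems
        by (simp add: C'_def vec.subspace_add vec.subspace_scale)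
      moreover have "\<forall>j\<in>insert i I. (c' + a *s c) $ j = t $ j"
        using c' c by (auto simp: a_def C'_def)
      ultimately show "\<exists>c\<in>C. \<forall>j\<in>insert i I. c $ j = t $ j" by blast
    qed
  qed
qed

lemma exists_dual_vector:
  fixes S :: "('a::field ^ 'n) set"
  assumes "vec.independent S" "t \<in> S"
  obtains u where "\<And>s. s \<in> S \<Longrightarrow> dot u s = (if s = t then 1 else 0)"
proof -
  obtain g :: "'a ^ 'n \<Rightarrow> 'a ^ 'n" where g: "Vector_Spaces.linear (*s) (*s) g"
    "\<forall>s\<in>S. g s = (if s = t then (\<chi> j. 1) else 0)"
    using vec.linear_independent_extend[OF assms(1), where f="\<lambda>s. if s = t then (\<chi> j. 1) else 0"]
    by blast
  define i0 :: 'n where "i0 = undefined"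
  define u where "u = (\<chi> j. g (axis j 1) $ i0)"
  have "dot u s = g s $ i0" for s
  proof -
    have "g s = (\<Sum>j\<in>UNIV. s $ j *s g (axis j 1))"
      by (subst basis_expansion[symmetric, of s])
        (simp add: vec.linear_sum[OF g(1)] vec.linear_scale[OF g(1)])
    then show ?thesis by (simp add: dot_def u_def mult.commute)
  qed
  then show ?thesis using g(2) by (intro that[of u]) simp
qed

lemma independent_pair:
  fixes B :: "('a::field ^ 'n) set"
  assumes "vec.independent B" "v1 \<in> B" "v2 \<in> B" "v1 \<noteq> v2" "a *s v1 + b *s v2 = 0"
  shows "a = 0 \<and> b = 0"
proof (rule ccontr)
  have dep: "vec.dependent B" if "u = c *s v" "u \<in> B" "v \<in> B" "u \<noteq> v" for u v c
  proof -
    have "c *s v \<in> vec.span (B - {u})" using that by (intro vec.span_scale vec.span_base) auto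
    then show ?thesis unfolding vec.dependent_def using that by auto
  qed
  assume "\<not> (a = 0 \<and> b = 0)"
  then consider "a \<noteq> 0" | "b \<noteq> 0" by blast
  then show False
  proof cases
    case 1
    then have "v1 = (- b / a) *s v2"
      using assms(5) by (simp add: vec_eq_iff field_simps eq_neg_iff_add_eq_0)
    then show False using dep[of v1 "- b / a" v2] assms(1-4) by blast
  next
    case 2
    then have "v2 = (- a / b) *s v1"
      using assms(5) by (simp add: vec_eq_iff field_simps eq_neg_iff_add_eq_0)
    then show False using dep[of v2 "- a / b" v1] assms(1-3) assms(4)[symmetric] by blast
  qed
qed

lemma exists_independent_pair_vanishing:
  fixes U :: "('a::field ^ 'n) set"
  assumes "vec.subspace U" "finite S" "card S + 2 \<le> vec.dim U"
  obtains v1 v2 where "v1 \<in> U" "v2 \<in> U" "\<forall>s\<in>S. v1 $ s = 0 \<and> v2 $ s = 0"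
    "\<And>a b. a *s v1 + b *s v2 = 0 \<Longrightarrow> a = 0 \<and> b = 0"
proof -
  define K where "K = {u\<in>U. \<forall>s\<in>S. u $ s = 0}"
  have "2 \<le> vec.dim K" using dim_le_dim_vanishing_coords[OF assms(1,2)] assms(3) by (simp add: K_def)
  moreover obtain B where B: "B \<subseteq> K" "vec.independent B" "K \<subseteq> vec.span B" "card B = vec.dim K"
    by (rule vec.basis_exists)
  ultimately have "\<not> card B \<le> Suc 0" by simp
  then obtain v1 v2 where "v1 \<in> B" "v2 \<in> B" "v1 \<noteq> v2"
    using card_le_Suc0_iff_eq[OF vec.finiteI_independent[OF B(2)]] by blast
  show ?thesis
  proof (rule that)
    show "v1 \<in> U" "v2 \<in> U" "\<forall>s\<in>S. v1 $ s = 0 \<and> v2 $ s = 0"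
      using \<open>v1 \<in> B\<close> \<open>v2 \<in> B\<close> B(1) by (auto simp: K_def)
    show "a = 0 \<and> b = 0" if "a *s v1 + b *s v2 = 0" for a b
      using independent_pair[OF B(2) \<open>v1 \<in> B\<close> \<open>v2 \<in> B\<close> \<open>v1 \<noteq> v2\<close> that] .
  qed
qed

lemma dot_diff_left: "dot (u - c) v = dot u v - dot c v"
  unfolding dot_def by (simp add: sum_subtractf left_diff_distrib)

lemma hamming_eq_card_diff: "hamming (u::'a::ab_group_add ^ 'n::finite) c = card {i. (u - c) $ i \<noteq> 0}"
  unfolding hamming_def by (simp add: right_minus_eq)

lemma covering_radius_le_codim:
  fixes C :: "('a::{field,finite} ^ 'n::finite) set"
  assumes "vec.subspace C"
  shows "covering_radius C \<le> CARD('n) - vec.dim C"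
proof -
  obtain I where I: "vec.dim C \<le> card I" "\<forall>t. \<exists>c\<in>C. \<forall>i\<in>I. c $ i = t $ i"
    using exists_information_set[OF assms] by blast
  have "Min (hamming u ` C) \<le> CARD('n) - vec.dim C" for u :: "'a ^ 'n"
  proof -
    obtain c where c: "c \<in> C" "\<forall>i\<in>I. c $ i = u $ i" using I(2) by blast
    then have "hamming u c \<le> card (UNIV - I)"
      unfolding hamming_def by (intro card_mono) auto
    also have "\<dots> \<le> CARD('n) - vec.dim C" using I(1) by (simp add: card_Diff_subset)
    finally show ?thesis using c(1) by (meson Min_le finite finite_imageI image_eqI order_trans)
  qed
  then show ?thesis unfolding covering_radius_def by (subst Max_le_iff) auto
qed

lemma covering_radius_ge:
  fixes C :: "('a::finite ^ 'n::finite) set"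
  assumes "C \<noteq> {}" "\<forall>c\<in>C. r \<le> hamming u c"
  shows "r \<le> covering_radius C"
proof -
  have "r \<le> Min (hamming u ` C)" using assms by (subst Min_ge_iff) auto
  also have "\<dots> \<le> covering_radius C" unfolding covering_radius_def by (intro Max_ge) auto
  finally show ?thesis .
qed

section \<open>The coordinate ring of a Weierstrass curve\<close>

text \<open>The coefficients of the same curve after the substitution (x, y) := (x + r, y + t).\<close>
lemma discr_translate:
  fixes a1 a2 a3 a4 a6 r t :: "'a::field"
  shows "discr \<lparr>wa1 = a1, wa2 = a2, wa3 = a3, wa4 = a4, wa6 = a6\<rparr> =
         discr \<lparr>wa1 = a1, wa2 = a2 + 3*r, wa3 = a3 + r*a1 + 2*t,
                wa4 = a4 + 2*r*a2 - t*a1 + 3*r^2,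
                wa6 = a6 + r*a4 + r^2*a2 + r^3 - t*a3 - t^2 - r*t*a1\<rparr>"
  unfolding discr_def Let_def weierstrass.select_convs by algebra

text \<open>Moving a singular point to the origin makes a3, a4 and a6 vanish, and then so does the
  discriminant.\<close>
lemma elliptic_nonsingular:
  fixes W :: "'a::field weierstrass"
  assumes "elliptic W" "on_curve W (x, y)" "2*y + wa1 W*x + wa3 W = 0"
  shows "wa1 W * y - (3*x^2 + 2*wa2 W*x + wa4 W) \<noteq> 0"
proof
  assume "wa1 W * y - (3*x^2 + 2*wa2 W*x + wa4 W) = 0"
  moreover obtain a1 a2 a3 a4 a6 where W: "W = \<lparr>wa1 = a1, wa2 = a2, wa3 = a3, wa4 = a4, wa6 = a6\<rparr>"
    by (cases W) auto
  ultimately have "a4 + 2*x*a2 - y*a1 + 3*x^2 = 0" by (simp add: algebra_simps)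
  moreover have "a3 + x*a1 + 2*y = 0" using assms(3) by (simp add: W algebra_simps)
  moreover have "a6 + x*a4 + x^2*a2 + x^3 - y*a3 - y^2 - x*y*a1 = 0"
    using assms(2) by (simp add: on_curve_def W algebra_simps)
  ultimately have "discr W = 0"
    unfolding W discr_translate[of a1 a2 a3 a4 a6 x y] by (simp add: discr_def Let_def)
  then show False using assms(1) by (simp add: elliptic_def)
qed

definition weier_h :: "'a::field weierstrass \<Rightarrow> 'a poly" where
  "weier_h W = [:wa3 W, wa1 W:]"

definition weier_f :: "'a::field weierstrass \<Rightarrow> 'a poly" where
  "weier_f W = [:wa6 W, wa4 W, wa2 W, 1:]"

lemma poly_weier_h: "poly (weier_h W) x = wa1 W * x + wa3 W"
  by (simp add: weier_h_def algebra_simps)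

lemma poly_weier_f: "poly (weier_f W) x = x^3 + wa2 W * x^2 + wa4 W * x + wa6 W"
  by (simp add: weier_f_def algebra_simps power2_eq_square power3_eq_cube)

lemma degree_weier_f [simp]: "degree (weier_f W) = 3"
  by (simp add: weier_f_def)

lemma weier_f_nonzero [simp]: "weier_f W \<noteq> 0"
  by (simp add: weier_f_def)

lemma degree_weier_h: "degree (weier_h W) \<le> 1"
  by (simp add: weier_h_def)

lemma on_curve_iff: "on_curve W (x, y) \<longleftrightarrow> y*y + poly (weier_h W) x * y = poly (weier_f W) x"
  by (simp add: on_curve_def poly_weier_h poly_weier_f algebra_simps power2_eq_square)

text \<open>A pair (A, B) stands for the function A(x) + B(x) y on the curve; these are exactly
  the functions whose only pole is at O. As x and y have poles of order 2 and 3 there, L(kO)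
  consists of the pairs with rf_ord at most k.\<close>
type_synonym 'a regfun = "'a poly \<times> 'a poly"

fun rf_mul :: "'a::field weierstrass \<Rightarrow> 'a regfun \<Rightarrow> 'a regfun \<Rightarrow> 'a regfun" where
  "rf_mul W (A, B) (C, D) = (A*C + B*D*weier_f W, A*D + B*C - B*D*weier_h W)"

fun rf_conj :: "'a::field weierstrass \<Rightarrow> 'a regfun \<Rightarrow> 'a regfun" where
  "rf_conj W (A, B) = (A - B*weier_h W, -B)"

fun rf_norm :: "'a::field weierstrass \<Rightarrow> 'a regfun \<Rightarrow> 'a poly" where
  "rf_norm W (A, B) = A*A - weier_h W*A*B - weier_f W*B*B"

fun rf_eval :: "'a::field regfun \<Rightarrow> 'a \<times> 'a \<Rightarrow> 'a" where
  "rf_eval (A, B) (x, y) = poly A x + poly B x * y"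

fun rf_ord :: "'a::field regfun \<Rightarrow> nat" where
  "rf_ord (A, B) = (if B = 0 then 2 * degree A else max (2 * degree A) (2 * degree B + 3))"

fun curve_neg :: "'a::field weierstrass \<Rightarrow> 'a \<times> 'a \<Rightarrow> 'a \<times> 'a" where
  "curve_neg W (x, y) = (x, - y - poly (weier_h W) x)"

lemma on_curve_neg: "on_curve W z \<Longrightarrow> on_curve W (curve_neg W z)"
  by (cases z) (simp add: on_curve_iff algebra_simps)

lemma curve_neg_neg [simp]: "curve_neg W (curve_neg W z) = z"
  by (cases z) simp

lemma fst_curve_neg [simp]: "fst (curve_neg W z) = fst z"
  by (cases z) simp

lemma rf_eval_mul:
  assumes "on_curve W z"
  shows "rf_eval (rf_mul W f g) z = rf_eval f z * rf_eval g z"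
proof -
  obtain x y where z: "z = (x, y)" by (cases z)
  obtain A B C D where fg: "f = (A, B)" "g = (C, D)" by (cases f, cases g)
  have curve: "y*y + poly (weier_h W) x * y = poly (weier_f W) x"
    using assms by (simp add: z on_curve_iff)
  show ?thesis by (simp add: z fg algebra_simps flip: curve)
qed

lemma rf_eval_conj: "rf_eval (rf_conj W f) z = rf_eval f (curve_neg W z)"
  by (cases f, cases z) (simp add: algebra_simps)

lemma poly_rf_norm:
  assumes "on_curve W z"
  shows "poly (rf_norm W f) (fst z) = rf_eval f z * rf_eval f (curve_neg W z)"
proof -
  obtain x y where z: "z = (x, y)" by (cases z)
  obtain A B where f: "f = (A, B)" by (cases f)
  have curve: "y*y + poly (weier_h W) x * y = poly (weier_f W) x"
    using assms by (simp add: z on_curve_iff)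
  show ?thesis by (simp add: z f algebra_simps flip: curve)
qed

lemma rf_norm_mul: "rf_norm W (rf_mul W f g) = rf_norm W f * rf_norm W g"
  by (induct f; induct g) (simp; algebra)

lemma rf_norm_conj: "rf_norm W (rf_conj W f) = rf_norm W f"
  by (induct f) (simp; algebra)

lemma rf_mul_conj_self: "rf_mul W f (rf_conj W f) = (rf_norm W f, 0)"
  by (induct f) (simp; algebra)

lemma rf_mul_assoc: "rf_mul W (rf_mul W f g) h = rf_mul W f (rf_mul W g h)"
  by (induct f; induct g; induct h) (simp; algebra)

lemma rf_mul_comm: "rf_mul W f g = rf_mul W g f"
  by (cases f, cases g) (simp add: algebra_simps)

lemma rf_mul_const: "rf_mul W f (N, 0) = (N * fst f, N * snd f)"
  by (cases f) (simp add: algebra_simps)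

text \<open>A^2 and f B^2 have pole orders of different parity, so one of them dominates.\<close>
lemma degree_rf_norm_main_terms:
  assumes "(A, B) \<noteq> (0, 0)"
  shows "degree (A*A - weier_f W * B * B) = rf_ord (A, B)"
proof (cases "B = 0")
  case True
  then show ?thesis by (cases "A = 0") (simp_all add: degree_mult_eq)
next
  case B: False
  have dfBB: "degree (- (weier_f W * B * B)) = 2 * degree B + 3"
    using B by (simp add: degree_mult_eq)
  have "degree (A*A + - (weier_f W * B * B)) = rf_ord (A, B)"
  proof (cases "A = 0")
    case True
    then show ?thesis using dfBB B by simp
  next
    case A: False
    have dAA: "degree (A * A) = 2 * degree A" using A by (simp add: degree_mult_eq)
    show ?thesis
    proof (cases "2 * degree A > 2 * degree B + 3")
      case True
      then show ?thesis using dAA dfBB B by (subst degree_add_eq_left) auto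
    next
      case False
      then have "2 * degree A < 2 * degree B + 3" by presburger
      then show ?thesis using dAA dfBB B by (subst degree_add_eq_right) auto
    qed
  qed
  then show ?thesis by simp
qed

text \<open>The middle term h A B of the norm has smaller pole order than A^2 - f B^2.\<close>
lemma rf_norm_nonzero_degree:
  assumes "f \<noteq> (0, 0)"
  shows "rf_norm W f \<noteq> 0 \<and> degree (rf_norm W f) = rf_ord f"
proof -
  obtain A B where f: "f = (A, B)" by (cases f)
  define Q where "Q = A*A - weier_f W * B * B"
  have dQ: "degree Q = rf_ord f"
    unfolding Q_def f by (rule degree_rf_norm_main_terms) (use assms f in simp)
  show ?thesis
  proof (cases "B = 0")
    case True
    then show ?thesis using assms dQ by (auto simp: f Q_def)
  next
    case False
    have "degree (- (weier_h W * A * B)) \<le> degree (weier_h W) + degree A + degree B"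
      using degree_mult_le[of "weier_h W" A] degree_mult_le[of "weier_h W * A" B] by simp
    then have "degree (- (weier_h W * A * B)) < degree Q"
      using dQ degree_weier_h[of W] False by (simp add: f)
    then have "degree (Q + - (weier_h W * A * B)) = rf_ord f"
      using dQ by (subst degree_add_eq_left) auto
    moreover have "rf_norm W f = Q + - (weier_h W * A * B)"
      by (simp add: f Q_def algebra_simps)
    moreover have "rf_ord f \<noteq> 0" using False by (simp add: f)
    ultimately show ?thesis by auto
  qed
qed

lemma rf_ord_mul:
  assumes "f \<noteq> (0, 0)" "g \<noteq> (0, 0)"
  shows "rf_ord (rf_mul W f g) = rf_ord f + rf_ord g"
proof -
  have "rf_norm W (rf_mul W f g) \<noteq> 0"
    using rf_norm_nonzero_degree[OF assms(1), of W] rf_norm_nonzero_degree[OF assms(2), of W]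
    by (simp add: rf_norm_mul)
  then have "rf_mul W f g \<noteq> (0, 0)" by auto
  then show ?thesis
    using rf_norm_nonzero_degree[OF assms(1), of W] rf_norm_nonzero_degree[OF assms(2), of W]
      rf_norm_nonzero_degree[of "rf_mul W f g" W]
    by (simp add: rf_norm_mul degree_mult_eq)
qed

lemma rf_ord_ne_1: "rf_ord f \<noteq> 1"
  by (cases f) auto

section \<open>Zeros of functions with poles only at O\<close>

lemma on_curve_same_x:
  assumes "on_curve W z" "on_curve W z'" "fst z' = fst z"
  shows "z' = z \<or> z' = curve_neg W z"
proof -
  obtain x y y' where z: "z = (x, y)" "z' = (x, y')" using assms(3) by (cases z, cases z') auto
  have "(y' - y) * (y' + y + poly (weier_h W) x) = 0"
    using assms(1,2) by (simp add: z on_curve_iff algebra_simps)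
  then consider "y' - y = 0" | "y' + y + poly (weier_h W) x = 0" by auto
  then show ?thesis by cases (auto simp: z algebra_simps eq_neg_iff_add_eq_0)
qed

definition fiber_card :: "('a \<times> 'a) set \<Rightarrow> 'a \<Rightarrow> nat" where
  "fiber_card Z x = card {z\<in>Z. fst z = x}"

definition xcoord_poly :: "('a::field \<times> 'a) set \<Rightarrow> 'a poly" where
  "xcoord_poly Z = (\<Prod>x\<in>fst ` Z. [:-x, 1:] ^ fiber_card Z x)"

lemma fiber_card_cases:
  assumes "finite Z" "\<forall>z\<in>Z. on_curve W z" "x \<in> fst ` Z"
  obtains z where "z \<in> Z" "fst z = x" "curve_neg W z \<notin> Z - {z}" "fiber_card Z x = 1"
  | z where "z \<in> Z" "fst z = x" "curve_neg W z \<in> Z - {z}" "fiber_card Z x = 2"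
proof -
  obtain z where z: "z \<in> Z" "fst z = x" using assms(3) by auto
  have "{z'\<in>Z. fst z' = x} \<subseteq> {z, curve_neg W z}"
    using on_curve_same_x[of W z] assms(2) z by auto
  then have "{z'\<in>Z. fst z' = x} = {z} \<union> ({curve_neg W z} \<inter> (Z - {z}))"
    using z by auto
  then show ?thesis
    using that z by (cases "curve_neg W z \<in> Z - {z}") (auto simp: fiber_card_def)
qed

lemma degree_xcoord_poly:
  assumes "finite Z"
  shows "degree (xcoord_poly Z) = card Z"
proof -
  have "degree (xcoord_poly Z) = (\<Sum>x\<in>fst ` Z. fiber_card Z x)"
    unfolding xcoord_poly_def by (subst degree_prod_eq_sum_degree) (auto simp: degree_linear_power)
  also have "\<dots> = card Z"
    unfolding fiber_card_def using card_eq_sum sum.image_gen[OF assms, of "\<lambda>_. 1::nat" fst] by simp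
  finally show ?thesis .
qed

lemma xcoord_poly_dvd:
  assumes "finite Z" "\<forall>x\<in>fst ` Z. [:-x, 1:] ^ fiber_card Z x dvd p"
  shows "xcoord_poly Z dvd p"
  unfolding xcoord_poly_def using assms by (intro prod_linear_powers_dvd) auto

definition rf_dvd :: "'a::field poly \<Rightarrow> 'a regfun \<Rightarrow> bool" where
  "rf_dvd q f \<longleftrightarrow> q dvd fst f \<and> q dvd snd f"

lemma rf_dvd_trans: "p dvd q \<Longrightarrow> rf_dvd q f \<Longrightarrow> rf_dvd p f"
  by (auto simp: rf_dvd_def intro: dvd_trans)

lemma rf_dvd_mul:
  assumes "rf_dvd p f" "rf_dvd q g"
  shows "rf_dvd (p * q) (rf_mul W f g)"
proof -
  obtain A B C D where fg: "f = (A, B)" "g = (C, D)" by (cases f, cases g)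
  then have "p dvd A" "p dvd B" "q dvd C" "q dvd D" using assms by (auto simp: rf_dvd_def)
  then have "p * q dvd A * C" "p * q dvd B * D" "p * q dvd A * D" "p * q dvd B * C"
    by (auto intro: mult_dvd_mono)
  then show ?thesis by (simp add: fg rf_dvd_def)
qed

lemma rf_dvd_conj: "rf_dvd q f \<Longrightarrow> rf_dvd q (rf_conj W f)"
  by (cases f) (auto simp: rf_dvd_def)

lemma rf_dvd_norm:
  assumes "rf_dvd q f"
  shows "q^2 dvd rf_norm W f"
proof -
  obtain A B where f: "f = (A, B)" by (cases f)
  then have "q dvd A" "q dvd B" using assms by (auto simp: rf_dvd_def)
  then have "q * q dvd A * A" "q * q dvd weier_h W * A * B" "q * q dvd weier_f W * B * B"
    by (auto intro: mult_dvd_mono dvd_mult)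
  then show ?thesis by (simp add: f power2_eq_square dvd_diff)
qed

lemma rf_dvd_xcoord_poly:
  assumes "finite Z" "\<forall>x\<in>fst ` Z. rf_dvd ([:-x, 1:] ^ fiber_card Z x) g"
  shows "rf_dvd (xcoord_poly Z) g"
  using assms xcoord_poly_dvd[OF assms(1)] by (auto simp: rf_dvd_def)

lemma rf_dvd_linear_if_vanishes_on_fiber:
  assumes "rf_eval g z = 0" "rf_eval g (curve_neg W z) = 0" "curve_neg W z \<noteq> z"
  shows "rf_dvd [:-fst z, 1:] g"
proof -
  obtain G0 G1 x y where gz: "g = (G0, G1)" "z = (x, y)" by (cases g, cases z)
  have "poly G0 x + poly G1 x * y = 0" "poly G0 x + poly G1 x * (- y - poly (weier_h W) x) = 0"
    using assms(1,2) by (simp_all add: gz)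
  then have "poly G1 x * y = poly G1 x * (- y - poly (weier_h W) x)"
    by (metis add_left_cancel)
  moreover have "y \<noteq> - y - poly (weier_h W) x" using assms(3) by (simp add: gz)
  ultimately have "poly G1 x = 0" by simp
  moreover have "poly G0 x = 0" using assms(1) calculation by (simp add: gz)
  ultimately show ?thesis by (simp add: gz rf_dvd_def poly_eq_0_iff_dvd)
qed

lemma xcoord_poly_dvd_rf_norm:
  assumes "finite Z" "\<forall>z\<in>Z. on_curve W z" "\<forall>z\<in>Z. rf_eval f z = 0"
  shows "xcoord_poly Z dvd rf_norm W f"
proof (rule xcoord_poly_dvd[OF assms(1)], rule ballI)
  fix x assume x: "x \<in> fst ` Z"
  show "[:-x, 1:] ^ fiber_card Z x dvd rf_norm W f"
  proof (cases rule: fiber_card_cases[OF assms(1,2) x])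
    case (1 z)
    then have "poly (rf_norm W f) x = 0" using poly_rf_norm[of W z f] assms by auto
    then show ?thesis using 1 by (simp add: poly_eq_0_iff_dvd)
  next
    case (2 z)
    then have "rf_dvd [:-x, 1:] f"
      using rf_dvd_linear_if_vanishes_on_fiber[of f z W] assms(3) by auto
    then show ?thesis using 2 by (simp add: rf_dvd_norm)
  qed
qed

lemma card_zeros_le_rf_ord:
  assumes "f \<noteq> (0, 0)" "finite Z" "\<forall>z\<in>Z. on_curve W z" "\<forall>z\<in>Z. rf_eval f z = 0"
  shows "card Z \<le> rf_ord f"
proof -
  have "degree (xcoord_poly Z) \<le> degree (rf_norm W f)"
    using xcoord_poly_dvd_rf_norm[OF assms(2-4)] rf_norm_nonzero_degree[OF assms(1), of W]
    by (blast intro: dvd_imp_degree_le)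
  then show ?thesis
    using degree_xcoord_poly[OF assms(2)] rf_norm_nonzero_degree[OF assms(1), of W] by simp
qed

section \<open>No function with a single simple pole\<close>

lemma poly_pderiv_rf_norm:
  "poly (pderiv (rf_norm W (G0, G1))) x =
     2 * poly G0 x * poly (pderiv G0) x
     - (wa1 W * poly G0 x * poly G1 x
        + poly (weier_h W) x * (poly (pderiv G0) x * poly G1 x + poly G0 x * poly (pderiv G1) x))
     - ((3*x^2 + 2*wa2 W*x + wa4 W) * poly G1 x * poly G1 x
        + 2 * poly (weier_f W) x * poly G1 x * poly (pderiv G1) x)"
proof -
  have "pderiv (weier_h W) = [:wa1 W:]" by (simp add: weier_h_def pderiv_pCons)
  moreover have "poly (pderiv (weier_f W)) x = 3*x^2 + 2*wa2 W*x + wa4 W"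
    by (simp add: weier_f_def pderiv_pCons algebra_simps power2_eq_square)
  ultimately show ?thesis
    by (simp only: rf_norm.simps pderiv_diff pderiv_mult) (simp add: algebra_simps power2_eq_square)
qed

text \<open>At a 2-torsion point the fiber of x consists of one point, so vanishing there gives only one
  linear condition on (G0, G1); the second one comes from the double root of the norm, and the two
  are independent because the curve is nonsingular.\<close>
lemma rf_dvd_linear_at_2_torsion:
  assumes "elliptic W" "on_curve W (x, y)" "curve_neg W (x, y) = (x, y)"
    and "rf_eval g (x, y) = 0" "[:-x, 1:]^2 dvd rf_norm W g"
  shows "rf_dvd [:-x, 1:] g"
proof -
  obtain G0 G1 where g: "g = (G0, G1)" by (cases g)
  have h: "poly (weier_h W) x + 2 * y = 0" using assms(3) by (simp add: algebra_simps mult_2)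
  have nonsing: "wa1 W * y - (3*x^2 + 2*wa2 W*x + wa4 W) \<noteq> 0"
    using elliptic_nonsingular[OF assms(1,2)] h by (simp add: poly_weier_h algebra_simps)
  have ev: "poly G0 x + poly G1 x * y = 0" using assms(4) by (simp add: g)
  have curve: "y*y + poly (weier_h W) x * y - poly (weier_f W) x = 0"
    using assms(2) by (simp add: on_curve_iff)
  have "poly (pderiv (rf_norm W (G0, G1))) x = 0"
    using assms(5) by (simp add: g poly_pderiv_eq_0_if_square_dvd)
  then have "poly G1 x * poly G1 x * (wa1 W * y - (3*x^2 + 2*wa2 W*x + wa4 W)) = 0"
    unfolding poly_pderiv_rf_norm using h curve ev by algebra
  then have "poly G1 x = 0" using nonsing by simp
  moreover have "poly G0 x = 0" using ev calculation by simp
  ultimately show ?thesis by (simp add: g rf_dvd_def poly_eq_0_iff_dvd)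
qed

lemma rf_dvd_quotient_at_fiber:
  assumes "elliptic W" "finite Z" "\<forall>z\<in>Z. on_curve W z" "x \<in> fst ` Z"
    and "\<forall>z\<in>Z. rf_eval f0 z = 0" "\<forall>z\<in>Z. rf_eval f1 z = 0"
  shows "rf_dvd ([:-x, 1:] ^ fiber_card Z x) (rf_mul W f1 (rf_conj W f0))"
    (is "rf_dvd _ ?g")
proof (cases rule: fiber_card_cases[OF assms(2,3,4)])
  case (1 z)
  have z: "on_curve W z" "rf_eval f0 z = 0" "rf_eval f1 z = 0" using 1 assms by auto
  have gz: "rf_eval ?g z = 0" using z by (simp add: rf_eval_mul)
  show ?thesis
  proof (cases "curve_neg W z = z")
    case False
    have "rf_eval ?g (curve_neg W z) = 0"
      using z by (simp add: rf_eval_mul on_curve_neg rf_eval_conj)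
    then show ?thesis using rf_dvd_linear_if_vanishes_on_fiber[OF gz] False 1 by simp
  next
    case True
    obtain y where xy: "z = (x, y)" using 1 by (cases z) auto
    have "[:-x, 1:] dvd rf_norm W f" if "rf_eval f z = 0" for f
      using poly_rf_norm[OF z(1), of f] that 1 by (simp add: poly_eq_0_iff_dvd)
    then have "[:-x, 1:] * [:-x, 1:] dvd rf_norm W f1 * rf_norm W f0"
      using z by (blast intro: mult_dvd_mono)
    then have "[:-x, 1:]^2 dvd rf_norm W ?g"
      by (simp add: rf_norm_mul rf_norm_conj power2_eq_square)
    then show ?thesis
      using rf_dvd_linear_at_2_torsion[OF assms(1)] z gz True 1 xy by simp
  qed
next
  case (2 z)
  then have "rf_dvd [:-x, 1:] f" if "\<forall>z\<in>Z. rf_eval f z = 0" for f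
    using rf_dvd_linear_if_vanishes_on_fiber[of f z W] that by auto
  then have "rf_dvd ([:-x, 1:] * [:-x, 1:]) ?g"
    using assms(5,6) by (blast intro: rf_dvd_mul rf_dvd_conj)
  then show ?thesis using 2 by (simp add: power2_eq_square)
qed

text \<open>f1 / f0 = f1 conj(f0) / N(f0), so the quotient is regular once N(f0) divides the numerator.\<close>
lemma rf_factor_if_norm_dvd:
  assumes "rf_norm W f0 \<noteq> 0" "rf_dvd (rf_norm W f0) (rf_mul W f1 (rf_conj W f0))"
  shows "\<exists>h. f1 = rf_mul W h f0"
proof -
  define N where "N = rf_norm W f0"
  obtain H0 H1 where H: "rf_mul W f1 (rf_conj W f0) = (N * H0, N * H1)"
    using assms(2) unfolding N_def rf_dvd_def by (metis dvdE prod.collapse)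
  have "(N * fst f1, N * snd f1) = rf_mul W f1 (N, 0)" by (simp add: rf_mul_const)
  also have "\<dots> = rf_mul W (rf_mul W f1 (rf_conj W f0)) f0"
    by (simp add: rf_mul_assoc rf_mul_comm[of W _ f0] rf_mul_conj_self N_def)
  also have "\<dots> = (N * fst (rf_mul W (H0, H1) f0), N * snd (rf_mul W (H0, H1) f0))"
    unfolding H by (cases f0) (simp add: algebra_simps)
  finally show ?thesis using assms(1) by (auto simp: N_def prod_eq_iff)
qed

text \<open>If f0 \<in> L(mO - Z) with m = |Z| and f1 \<in> L((m+1)O - Z) had exact pole order m + 1, the
  divisors force f1 / f0 to be regular away from O with a single simple pole at O, which does not
  exist on a curve of genus 1.\<close>
lemma no_vanishing_rf_of_ord_Suc:
  assumes "elliptic W" "finite Z" "\<forall>z\<in>Z. on_curve W z"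
    and "f0 \<noteq> (0, 0)" "rf_ord f0 \<le> card Z" "\<forall>z\<in>Z. rf_eval f0 z = 0"
    and "f1 \<noteq> (0, 0)" "rf_ord f1 = card Z + 1" "\<forall>z\<in>Z. rf_eval f1 z = 0"
  shows False
proof -
  have N0: "rf_norm W f0 \<noteq> 0" "degree (rf_norm W f0) = rf_ord f0"
    using rf_norm_nonzero_degree[OF assms(4)] by auto
  have "card Z \<le> rf_ord f0" using card_zeros_le_rf_ord[OF assms(4,2,3,6)] .
  then have "degree (rf_norm W f0) \<le> degree (xcoord_poly Z)"
    using N0 assms(5) degree_xcoord_poly[OF assms(2)] by simp
  then have "rf_norm W f0 dvd xcoord_poly Z"
    using dvd_if_dvd_degree_ge[OF xcoord_poly_dvd_rf_norm[OF assms(2,3,6)] N0(1)] by simp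
  moreover have "rf_dvd (xcoord_poly Z) (rf_mul W f1 (rf_conj W f0))"
    using rf_dvd_quotient_at_fiber[OF assms(1-3) _ assms(6,9)] by (intro rf_dvd_xcoord_poly assms(2)) auto
  ultimately obtain h where h: "f1 = rf_mul W h f0"
    using rf_factor_if_norm_dvd[OF N0(1)] rf_dvd_trans by blast
  then have "h \<noteq> (0, 0)" using assms(7) by (cases f0) auto
  then have "rf_ord f1 = rf_ord h + rf_ord f0" using rf_ord_mul assms(4) h by metis
  then have "rf_ord h = 1" using assms(5,8) \<open>card Z \<le> rf_ord f0\<close> by simp
  then show False using rf_ord_ne_1 by blast
qed

text \<open>The coefficient of the unique monomial of pole order j.\<close>
fun rf_top_coeff :: "nat \<Rightarrow> 'a::field regfun \<Rightarrow> 'a" where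
  "rf_top_coeff j (A, B) = (if even j then coeff A (j div 2) else coeff B ((j - 3) div 2))"

fun rf_lincomb :: "'a::field \<Rightarrow> 'a regfun \<Rightarrow> 'a \<Rightarrow> 'a regfun \<Rightarrow> 'a regfun" where
  "rf_lincomb a (A, B) b (C, D) = (smult a A + smult b C, smult a B + smult b D)"

lemma rf_top_coeff_lincomb:
  "rf_top_coeff j (rf_lincomb a f b g) = a * rf_top_coeff j f + b * rf_top_coeff j g"
  by (cases f, cases g) auto

lemma rf_eval_lincomb: "rf_eval (rf_lincomb a f b g) z = a * rf_eval f z + b * rf_eval g z"
  by (cases f, cases g, cases z) (auto simp: algebra_simps)

lemma rf_ord_lincomb_le:
  assumes "rf_ord f \<le> j" "rf_ord g \<le> j"
  shows "rf_ord (rf_lincomb a f b g) \<le> j"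
proof -
  obtain A B C D where fg: "f = (A, B)" "g = (C, D)" by (cases f, cases g)
  have "degree (smult a A + smult b C) \<le> max (degree A) (degree C)"
    "degree (smult a B + smult b D) \<le> max (degree B) (degree D)"
    by (auto intro!: degree_add_le intro: order_trans[OF degree_smult_le])
  moreover have "smult a B + smult b D = 0" if "B = 0" "D = 0" using that by simp
  ultimately show ?thesis using assms by (auto simp: fg split: if_splits)
qed

lemma rf_top_coeff_ord:
  assumes "f \<noteq> (0, 0)"
  shows "rf_top_coeff (rf_ord f) f \<noteq> 0"
proof -
  obtain A B where f: "f = (A, B)" by (cases f)
  show ?thesis
  proof (cases "B \<noteq> 0 \<and> 2 * degree A < 2 * degree B + 3")
    case True
    then have "rf_ord f = 2 * degree B + 3" by (simp add: f)
    then show ?thesis using True by (simp add: f)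
  next
    case False
    then have "A \<noteq> 0" using assms f by auto
    moreover have "rf_ord f = 2 * degree A" using False by (auto simp: f)
    ultimately show ?thesis by (simp add: f)
  qed
qed

lemma rf_top_coeff_above_ord:
  assumes "rf_ord f < j"
  shows "rf_top_coeff j f = 0"
proof -
  obtain A B where f: "f = (A, B)" by (cases f)
  have A: "2 * degree A < j" using assms by (auto simp: f split: if_splits)
  have B: "B = 0 \<or> 2 * degree B + 3 < j" using assms by (auto simp: f split: if_splits)
  show ?thesis
  proof (cases "even j")
    case True
    then have "degree A < j div 2" using A by presburger
    then show ?thesis using True by (simp add: f coeff_eq_0)
  next
    case False
    have "degree B < (j - 3) div 2" if "2 * degree B + 3 < j" using that False by presburger
    then show ?thesis using B False by (auto simp: f coeff_eq_0)
  qed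
qed

lemma rf_ord_le_pred:
  assumes "rf_ord f \<le> j" "rf_top_coeff j f = 0"
  shows "rf_ord f \<le> j - 1"
  using assms rf_top_coeff_ord[of f] by (cases "f = (0, 0)") (auto simp: le_less)

lemma rf_ord_eq_if_top_coeff:
  assumes "rf_ord f \<le> j" "rf_top_coeff j f \<noteq> 0"
  shows "rf_ord f = j"
  using assms rf_top_coeff_above_ord[of f j] by linarith

lemma rf_lincomb_lower_ord:
  assumes "rf_ord f \<le> j" "rf_ord g \<le> j"
  obtains a b where "(a, b) \<noteq> (0, 0)" "rf_ord (rf_lincomb a f b g) \<le> j - 1"
proof (cases "rf_top_coeff j f = 0")
  case True
  have "rf_lincomb 1 f 0 g = f" by (cases f, cases g) simp
  then show ?thesis using that[of 1 0] rf_ord_le_pred[OF assms(1) True] by simp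
next
  case False
  let ?h = "rf_lincomb (rf_top_coeff j g) f (- rf_top_coeff j f) g"
  have "rf_top_coeff j ?h = 0" by (simp add: rf_top_coeff_lincomb algebra_simps)
  then have "rf_ord ?h \<le> j - 1" by (rule rf_ord_le_pred[OF rf_ord_lincomb_le[OF assms]])
  then show ?thesis using False by (intro that) auto
qed

text \<open>In other words dim L((m+1)O - Z) \<le> 1 for m = |Z| \<ge> 1.\<close>
lemma vanishing_rfs_dependent:
  assumes "elliptic W" "finite Z" "\<forall>z\<in>Z. on_curve W z" "1 \<le> card Z"
    and "rf_ord f1 \<le> card Z + 1" "rf_ord f2 \<le> card Z + 1"
    and "\<forall>z\<in>Z. rf_eval f1 z = 0" "\<forall>z\<in>Z. rf_eval f2 z = 0"
  shows "\<exists>a b. (a, b) \<noteq> (0, 0) \<and> rf_lincomb a f1 b f2 = (0, 0)"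
proof (rule ccontr)
  assume indep: "\<nexists>a b. (a, b) \<noteq> (0, 0) \<and> rf_lincomb a f1 b f2 = (0, 0)"
  define m where "m = card Z"
  have nonzero: "rf_lincomb a f1 b f2 \<noteq> (0, 0)" if "(a, b) \<noteq> (0, 0)" for a b
    using indep that by blast
  have vanish: "\<forall>z\<in>Z. rf_eval (rf_lincomb a f1 b f2) z = 0" for a b
    using assms(7,8) by (simp add: rf_eval_lincomb)
  have ord_ge: "m \<le> rf_ord (rf_lincomb a f1 b f2)" if "(a, b) \<noteq> (0, 0)" for a b
    unfolding m_def by (rule card_zeros_le_rf_ord[OF nonzero[OF that] assms(2,3) vanish])
  obtain a b where ab: "(a, b) \<noteq> (0, 0)" "rf_ord (rf_lincomb a f1 b f2) \<le> m"
    using rf_lincomb_lower_ord[of f1 "m + 1" f2] assms(5,6) m_def by auto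
  show False
  proof (cases "\<exists>f\<in>{f1, f2}. rf_top_coeff (m + 1) f \<noteq> 0")
    case True
    then obtain f where f: "f \<in> {f1, f2}" "rf_top_coeff (m + 1) f \<noteq> 0" by blast
    have "f \<noteq> (0, 0)" using f(2) by (auto simp only: rf_top_coeff.simps coeff_0 if_cancel)
    moreover have "rf_ord f = m + 1"
      using rf_ord_eq_if_top_coeff[OF _ f(2)] f(1) assms(5,6) m_def by auto
    moreover have "\<forall>z\<in>Z. rf_eval f z = 0" using f(1) assms(7,8) by auto
    ultimately show False
      using no_vanishing_rf_of_ord_Suc[OF assms(1-3) nonzero[OF ab(1)] _ vanish] ab(2) m_def
      by blast
  next
    case False
    then have "rf_ord f1 \<le> m" "rf_ord f2 \<le> m"
      using rf_ord_le_pred[OF assms(5)] rf_ord_le_pred[OF assms(6)] m_def by auto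
    then obtain a' b' where "(a', b') \<noteq> (0, 0)" "rf_ord (rf_lincomb a' f1 b' f2) \<le> m - 1"
      by (rule rf_lincomb_lower_ord)
    then show False using ord_ge[of a' b'] assms(4) m_def by linarith
  qed
qed

section \<open>The codes C_L(D, kO) and C_Omega(D, kO)\<close>

definition monomial_vec :: "('n::finite \<Rightarrow> 'a::field \<times> 'a) \<Rightarrow> nat \<times> nat \<Rightarrow> 'a ^ 'n" where
  "monomial_vec P m = (\<chi> i. fst (P i) ^ fst m * snd (P i) ^ snd m)"

definition eval_vec ::
    "('n::finite \<Rightarrow> 'a::field \<times> 'a) \<Rightarrow> nat \<Rightarrow> (nat \<times> nat \<Rightarrow> 'a) \<Rightarrow> 'a ^ 'n" where
  "eval_vec P k c = (\<chi> i. \<Sum>(a, b)\<in>LkO_monomials k. c (a, b) * fst (P i) ^ a * snd (P i) ^ b)"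

definition rf_of_coeffs :: "(nat \<times> nat \<Rightarrow> 'a::field) \<Rightarrow> nat \<Rightarrow> 'a regfun" where
  "rf_of_coeffs c k = ((\<Sum>i | 2*i \<le> k. monom (c (i, 0)) i), (\<Sum>i | 2*i + 3 \<le> k. monom (c (i, 1)) i))"

lemma code_L_eq_range: "code_L P k = range (eval_vec P k)"
  unfolding code_L_def eval_vec_def by auto

lemma LkO_exponent_ranges:
  "{i. 2*i \<le> k} = {..< k div 2 + 1}" "{i. 2*i + 3 \<le> k} = {..< (k - 1) div 2}" for k :: nat
  by auto

lemma LkO_monomials_eq:
  "LkO_monomials k = (\<lambda>i. (i, 0)) ` {..< k div 2 + 1} \<union> (\<lambda>i. (i, 1)) ` {..< (k - 1) div 2}"
  unfolding LkO_monomials_def by (auto simp: image_iff le_Suc_eq)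

lemma finite_LkO_monomials [simp]: "finite (LkO_monomials k)"
  unfolding LkO_monomials_eq by simp

lemma card_LkO_monomials:
  assumes "1 \<le> k"
  shows "card (LkO_monomials k) = k"
proof -
  have "card (LkO_monomials k) = (k div 2 + 1) + (k - 1) div 2"
    unfolding LkO_monomials_eq by (subst card_Un_disjoint) (auto simp: card_image inj_on_def)
  also have "\<dots> = k" using assms by presburger
  finally show ?thesis .
qed

lemma LkO_monomials_mono: "k1 \<le> k2 \<Longrightarrow> LkO_monomials k1 \<subseteq> LkO_monomials k2"
  unfolding LkO_monomials_def by auto

lemma eval_vec_nth: "eval_vec P k c $ i = rf_eval (rf_of_coeffs c k) (P i)"
proof -
  obtain x y where P: "P i = (x, y)" by (cases "P i")
  have "(\<Sum>(a, b)\<in>LkO_monomials k. c (a, b) * x ^ a * y ^ b) =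
        (\<Sum>i | 2*i \<le> k. c (i, 0) * x ^ i) + (\<Sum>i | 2*i + 3 \<le> k. c (i, 1) * x ^ i * y)"
    unfolding LkO_monomials_eq LkO_exponent_ranges
    by (subst sum.union_disjoint) (auto simp: sum.reindex inj_on_def)
  then show ?thesis
    by (simp add: eval_vec_def rf_of_coeffs_def P poly_sum poly_monom sum_distrib_right)
qed

lemma rf_ord_rf_of_coeffs: "rf_ord (rf_of_coeffs c k) \<le> k"
proof -
  obtain A B where AB: "rf_of_coeffs c k = (A, B)" by (cases "rf_of_coeffs c k")
  have "A = (\<Sum>i | 2*i \<le> k. monom (c (i, 0)) i)" using AB by (simp add: rf_of_coeffs_def)
  then have "degree A \<le> k div 2"
    by (simp only:) (rule degree_sum_le, auto simp: LkO_exponent_ranges intro: order_trans[OF degree_monom_le])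
  moreover have "B = 0 \<or> 2 * degree B + 3 \<le> k"
  proof (cases "k < 3")
    case True
    then show ?thesis using AB by (auto simp: rf_of_coeffs_def intro!: sum.neutral)
  next
    case False
    have "B = (\<Sum>i | 2*i + 3 \<le> k. monom (c (i, 1)) i)" using AB by (simp add: rf_of_coeffs_def)
    then have "degree B \<le> (k - 3) div 2"
      by (simp only:) (rule degree_sum_le, auto simp: LkO_exponent_ranges intro: order_trans[OF degree_monom_le])
    then have "2 * degree B + 3 \<le> k" using False by presburger
    then show ?thesis by simp
  qed
  ultimately show ?thesis by (auto simp: AB)
qed

lemma rf_of_coeffs_eq_0_imp:
  assumes "rf_of_coeffs c k = (0, 0)" "m \<in> LkO_monomials k"
  shows "c m = 0"
proof -
  have "coeff (fst (rf_of_coeffs c k)) i = c (i, 0)" if "2*i \<le> k" for i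
    using that by (simp add: rf_of_coeffs_def coeff_sum coeff_monom LkO_exponent_ranges) presburger
  moreover have "coeff (snd (rf_of_coeffs c k)) i = c (i, 1)" if "2*i + 3 \<le> k" for i
    using that by (simp add: rf_of_coeffs_def coeff_sum coeff_monom LkO_exponent_ranges)
  ultimately show ?thesis using assms by (auto simp: LkO_monomials_def le_Suc_eq)
qed

lemma eval_vec_eq_sum: "eval_vec P k c = (\<Sum>m\<in>LkO_monomials k. c m *s monomial_vec P m)"
  by (simp add: eval_vec_def monomial_vec_def vec_eq_iff case_prod_beta mult.assoc)

lemma eval_vec_indicator:
  "m \<in> LkO_monomials k \<Longrightarrow> eval_vec P k (\<lambda>m'. if m' = m then a else 0) = a *s monomial_vec P m"
  unfolding eval_vec_eq_sum by (simp add: if_distrib[of "\<lambda>a. a *s _"] sum.delta cong: if_cong)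

lemma eval_vec_restrict:
  assumes "k1 \<le> k2"
  shows "eval_vec P k2 (\<lambda>m. if m \<in> LkO_monomials k1 then c m else 0) = eval_vec P k1 c"
  unfolding eval_vec_eq_sum using LkO_monomials_mono[OF assms]
  by (subst sum.mono_neutral_right) auto

lemma eval_vec_add: "eval_vec P k c1 + eval_vec P k c2 = eval_vec P k (\<lambda>m. c1 m + c2 m)"
  by (simp add: eval_vec_eq_sum sum.distrib[symmetric] vec.scale_left_distrib)

lemma eval_vec_scale: "a *s eval_vec P k c = eval_vec P k (\<lambda>m. a * c m)"
  by (simp add: eval_vec_eq_sum vec.scale_sum_right)

lemma dot_eval_vec: "dot u (eval_vec P k c) = (\<Sum>m\<in>LkO_monomials k. c m * dot u (monomial_vec P m))"
  unfolding dot_def eval_vec_eq_sum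
  by (simp add: sum_distrib_left sum_distrib_right mult.assoc mult.left_commute sum.swap[of _ UNIV])

lemma monomial_vec_in_code_L: "m \<in> LkO_monomials k \<Longrightarrow> monomial_vec P m \<in> code_L P k"
  using eval_vec_indicator[of m k P 1] by (simp add: code_L_eq_range) (metis rangeI)

lemma code_L_mono: "k1 \<le> k2 \<Longrightarrow> code_L P k1 \<subseteq> code_L P k2"
  unfolding code_L_eq_range by (auto simp flip: eval_vec_restrict)

lemma subspace_code_L: "vec.subspace (code_L P k)"
proof -
  have "0 = eval_vec P k (\<lambda>_. 0)" by (simp add: eval_vec_eq_sum)
  then show ?thesis
    unfolding vec.subspace_def code_L_eq_range by (auto simp: eval_vec_add eval_vec_scale)
qed

lemma subspace_code_Omega: "vec.subspace (code_Omega P k)"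
proof -
  have "vec.subspace {u\<in>UNIV. \<forall>s\<in>code_L P k. dot u s = 0}"
    by (rule subspace_common_kernel[OF vec.subspace_UNIV])
      (auto simp: dot_def sum.distrib algebra_simps sum_distrib_left)
  then show ?thesis by (simp add: code_Omega_def dual_code_def)
qed

lemma card_zeros_eval_vec_le:
  assumes "inj P" "\<forall>i. on_curve W (P i)" "\<exists>m\<in>LkO_monomials k. c m \<noteq> 0"
  shows "card {i. eval_vec P k c $ i = 0} \<le> k"
proof -
  define Z where "Z = {i. eval_vec P k c $ i = 0}"
  have "card Z = card (P ` Z)"
    using card_image[OF inj_on_subset[OF assms(1)]] by simp
  also have "\<dots> \<le> rf_ord (rf_of_coeffs c k)"
    using rf_of_coeffs_eq_0_imp assms(3)
    by (intro card_zeros_le_rf_ord) (use assms(2) in \<open>auto simp: Z_def eval_vec_nth\<close>)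
  also have "\<dots> \<le> k" by (rule rf_ord_rf_of_coeffs)
  finally show ?thesis by (simp add: Z_def)
qed

lemma eval_vec_eq_0_imp:
  fixes P :: "'n::finite \<Rightarrow> 'a::field \<times> 'a"
  assumes "inj P" "\<forall>i. on_curve W (P i)" "k < CARD('n)" "eval_vec P k c = 0"
  shows "\<forall>m\<in>LkO_monomials k. c m = 0"
  using card_zeros_eval_vec_le[OF assms(1,2), of k c] assms(3,4) by auto

lemma monomial_vecs_independent:
  fixes P :: "'n::finite \<Rightarrow> 'a::field \<times> 'a"
  assumes "inj P" "\<forall>i. on_curve W (P i)" "k < CARD('n)"
  shows "inj_on (monomial_vec P) (LkO_monomials k)"
    and "vec.independent (monomial_vec P ` LkO_monomials k)"
proof -
  show inj: "inj_on (monomial_vec P) (LkO_monomials k)"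
  proof (rule inj_onI, rule ccontr)
    fix m1 m2
    assume m: "m1 \<in> LkO_monomials k" "m2 \<in> LkO_monomials k" "monomial_vec P m1 = monomial_vec P m2"
      and "m1 \<noteq> m2"
    define c where "c = (\<lambda>m'. (if m' = m1 then 1 else 0) + (if m' = m2 then -1 else (0::'a)))"
    have "eval_vec P k c = monomial_vec P m1 + (-1) *s monomial_vec P m2"
      unfolding c_def eval_vec_add[symmetric]
      using eval_vec_indicator[OF m(1), of P 1] eval_vec_indicator[OF m(2), of P "-1"] by simp
    then have "eval_vec P k c = 0" using m(3) by (simp add: vec.scale_minus_left)
    moreover have "c m1 \<noteq> 0" using \<open>m1 \<noteq> m2\<close> by (simp add: c_def)
    ultimately show False using eval_vec_eq_0_imp[OF assms] m(1) by blast
  qed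
  show "vec.independent (monomial_vec P ` LkO_monomials k)"
  proof
    assume "vec.dependent (monomial_vec P ` LkO_monomials k)"
    then obtain u where u: "\<exists>v\<in>monomial_vec P ` LkO_monomials k. u v \<noteq> 0"
      "(\<Sum>v\<in>monomial_vec P ` LkO_monomials k. u v *s v) = 0"
      using vec.dependent_finite[of "monomial_vec P ` LkO_monomials k"] by auto
    have "(\<Sum>v\<in>monomial_vec P ` LkO_monomials k. u v *s v) = eval_vec P k (\<lambda>m. u (monomial_vec P m))"
      unfolding eval_vec_eq_sum by (simp add: sum.reindex[OF inj])
    then show False using eval_vec_eq_0_imp[OF assms] u by auto
  qed
qed

lemma dim_code_L_ge:
  fixes P :: "'n::finite \<Rightarrow> 'a::field \<times> 'a"
  assumes "inj P" "\<forall>i. on_curve W (P i)" "1 \<le> k" "k < CARD('n)"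
  shows "k \<le> vec.dim (code_L P k)"
proof -
  have "k = card (monomial_vec P ` LkO_monomials k)"
    using monomial_vecs_independent(1)[OF assms(1,2,4)] card_LkO_monomials[OF assms(3)]
    by (simp add: card_image)
  also have "\<dots> = vec.dim (monomial_vec P ` LkO_monomials k)"
    using monomial_vecs_independent(2)[OF assms(1,2,4)] by (simp add: vec.dim_eq_card_independent)
  also have "\<dots> \<le> vec.dim (code_L P k)"
    by (rule vec.dim_subset) (auto intro: monomial_vec_in_code_L)
  finally show ?thesis .
qed

lemma dim_code_Omega_ge:
  fixes P :: "'n::finite \<Rightarrow> 'a::field \<times> 'a"
  assumes "1 \<le> k"
  shows "CARD('n) \<le> vec.dim (code_Omega P k) + k"
proof -
  define S where "S = monomial_vec P ` LkO_monomials k"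
  have "{u. \<forall>s\<in>S. dot u s = 0} \<subseteq> code_Omega P k"
    by (auto simp: S_def code_Omega_def dual_code_def code_L_eq_range dot_eval_vec)
  then have "vec.dim {u. \<forall>s\<in>S. dot u s = 0} \<le> vec.dim (code_Omega P k)" by (rule vec.dim_subset)
  moreover have "card S \<le> k"
    using card_image_le[of "LkO_monomials k" "monomial_vec P"] card_LkO_monomials[OF assms]
    by (simp add: S_def)
  ultimately show ?thesis using card_le_dim_orthogonal[of S] by (simp add: S_def)
qed

lemma code_L_vanishing_pair_dependent:
  assumes "elliptic W" "inj P" "\<forall>i. on_curve W (P i)" "1 \<le> card T"
    and "v1 \<in> code_L P (card T + 1)" "v2 \<in> code_L P (card T + 1)"
    and "\<forall>t\<in>T. v1 $ t = 0 \<and> v2 $ t = 0"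
  shows "\<exists>a b. (a, b) \<noteq> (0, 0) \<and> a *s v1 + b *s v2 = 0"
proof -
  define m where "m = card T"
  obtain c1 c2 where c: "v1 = eval_vec P (m + 1) c1" "v2 = eval_vec P (m + 1) c2"
    using assms(5,6) by (auto simp: m_def code_L_eq_range)
  have "\<forall>z\<in>P ` T. rf_eval (rf_of_coeffs c1 (m + 1)) z = 0"
    "\<forall>z\<in>P ` T. rf_eval (rf_of_coeffs c2 (m + 1)) z = 0"
    using assms(7) by (auto simp: c eval_vec_nth)
  moreover have "card (P ` T) = m" unfolding m_def using card_image[OF inj_on_subset[OF assms(2)]] by simp
  moreover have "\<forall>z\<in>P ` T. on_curve W z" using assms(3) by auto
  ultimately have "\<exists>a b. (a, b) \<noteq> (0, 0) \<and>
      rf_lincomb a (rf_of_coeffs c1 (m + 1)) b (rf_of_coeffs c2 (m + 1)) = (0, 0)"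
    using assms(4) rf_ord_rf_of_coeffs[of c1 "m + 1"] rf_ord_rf_of_coeffs[of c2 "m + 1"]
    by (intro vanishing_rfs_dependent[OF assms(1), of "P ` T"]) (auto simp: m_def)
  then obtain a b where ab: "(a, b) \<noteq> (0, 0)"
    "rf_lincomb a (rf_of_coeffs c1 (m + 1)) b (rf_of_coeffs c2 (m + 1)) = (0, 0)" by blast
  have "rf_eval (rf_lincomb a (rf_of_coeffs c1 (m + 1)) b (rf_of_coeffs c2 (m + 1))) (P i) = 0" for i
    using ab(2) by (cases "P i") simp
  then have "a *s v1 + b *s v2 = 0"
    by (simp add: vec_eq_iff c eval_vec_nth rf_eval_lincomb)
  then show ?thesis using ab(1) by blast
qed

text \<open>If the support T of w had m < j points, two
  independent words of C_L(D, (m+1)O) vanishing on T minus one point would exist by counting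
  dimensions; orthogonality makes them vanish on all of T, contradicting dim L((m+1)O - T) \<le> 1.\<close>
lemma dual_weight_ge:
  fixes P :: "'n::finite \<Rightarrow> 'a::field \<times> 'a" and w :: "'a ^ 'n"
  assumes "elliptic W" "inj P" "\<forall>i. on_curve W (P i)" "j < CARD('n)"
    and "w \<noteq> 0" "\<forall>v\<in>code_L P j. dot w v = 0"
  shows "j \<le> card {i. w $ i \<noteq> 0}"
proof (rule ccontr)
  define T where "T = {i. w $ i \<noteq> 0}"
  define m where "m = card T"
  assume "\<not> j \<le> card {i. w $ i \<noteq> 0}"
  then have "m < j" by (simp add: m_def T_def)
  obtain t0 where t0: "t0 \<in> T" using assms(5) by (auto simp: T_def vec_eq_iff)
  then have "1 \<le> m" by (auto simp: m_def Suc_le_eq card_gt_0_iff)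
  define L where "L = code_L P (m + 1)"
  have "L \<subseteq> code_L P j" unfolding L_def using \<open>m < j\<close> by (simp add: code_L_mono)
  have "card (T - {t0}) + 2 \<le> vec.dim L"
    using dim_code_L_ge[OF assms(2,3), of "m + 1"] \<open>m < j\<close> \<open>1 \<le> m\<close> assms(4) t0
    by (simp add: L_def m_def)
  moreover have "vec.subspace L" "finite (T - {t0})" by (simp_all add: L_def subspace_code_L)
  ultimately obtain v1 v2 where v: "v1 \<in> L" "v2 \<in> L" "\<forall>s\<in>T - {t0}. v1 $ s = 0 \<and> v2 $ s = 0"
    and indep: "\<And>a b. a *s v1 + b *s v2 = 0 \<Longrightarrow> a = 0 \<and> b = 0"
    using exists_independent_pair_vanishing by metis
  have "\<forall>t\<in>T. v $ t = 0" if "v \<in> {v1, v2}" for v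
  proof -
    have "(\<Sum>i\<in>UNIV - {t0}. w $ i * v $ i) = 0"
      using v that by (intro sum.neutral) (auto simp: T_def)
    then have "dot w v = w $ t0 * v $ t0"
      unfolding dot_def by (simp add: sum.remove[of UNIV t0])
    moreover have "dot w v = 0" using assms(6) v that \<open>L \<subseteq> code_L P j\<close> by auto
    ultimately show ?thesis using v that t0 by (auto simp: T_def)
  qed
  then show False
    using code_L_vanishing_pair_dependent[OF assms(1-3) \<open>1 \<le> m\<close>[unfolded m_def], of v1 v2]
      v indep by (auto simp: L_def m_def)
qed

text \<open>The monomial of pole order exactly j; there is none of pole order 1, so j \<ge> 2 is needed.\<close>
definition top_monomial :: "nat \<Rightarrow> nat \<times> nat" where
  "top_monomial j = (if even j then (j div 2, 0) else ((j - 3) div 2, 1))"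

lemma top_monomial_in: "2 \<le> j \<Longrightarrow> top_monomial j \<in> LkO_monomials j"
  unfolding top_monomial_def LkO_monomials_def by (auto; presburger)

lemma top_monomial_notin: "2 \<le> j \<Longrightarrow> top_monomial j \<notin> LkO_monomials (j - 1)"
  unfolding top_monomial_def LkO_monomials_def by (auto; presburger)

text \<open>The word of the next monomial x^a y^b, of pole order k + 1, differs from every codeword
  c = f(D) by the evaluation of a nonzero function of L((k+1)O), which has at most k + 1 zeros.\<close>
lemma covering_radius_code_L_ge:
  fixes P :: "'n::finite \<Rightarrow> 'a::{field,finite} \<times> 'a"
  assumes "inj P" "\<forall>i. on_curve W (P i)" "2 \<le> k"
  shows "CARD('n) - (k + 1) \<le> covering_radius (code_L P k)"
proof (rule covering_radius_ge)
  show "code_L P k \<noteq> {}" unfolding code_L_eq_range by simp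
  define t where "t = top_monomial (k + 1)"
  have t: "t \<in> LkO_monomials (k + 1)" "t \<notin> LkO_monomials k"
    using top_monomial_in[of "k + 1"] top_monomial_notin[of "k + 1"] assms(3) by (auto simp: t_def)
  show "\<forall>c\<in>code_L P k. CARD('n) - (k + 1) \<le> hamming (monomial_vec P t) c"
  proof
    fix c assume "c \<in> code_L P k"
    then obtain c0 where c: "c = eval_vec P k c0" unfolding code_L_eq_range by auto
    define c' where "c' = (\<lambda>m. (if m = t then 1 else 0) + (-1) * (if m \<in> LkO_monomials k then c0 m else 0))"
    have "eval_vec P (k + 1) c' = monomial_vec P t + (-1) *s eval_vec P k c0"
      unfolding c'_def eval_vec_add[symmetric] eval_vec_scale[symmetric]
      using eval_vec_indicator[OF t(1), of P 1] eval_vec_restrict[of k "k + 1" P c0] by simp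
    then have "monomial_vec P t - c = eval_vec P (k + 1) c'"
      by (simp add: c vec.scale_minus_left)
    moreover have "c' t \<noteq> 0" using t(2) by (simp add: c'_def)
    then have "card {i. eval_vec P (k + 1) c' $ i = 0} \<le> k + 1"
      using t(1) by (intro card_zeros_eval_vec_le[OF assms(1,2)]) blast
    moreover have "{i. eval_vec P (k + 1) c' $ i \<noteq> 0} = UNIV - {i. eval_vec P (k + 1) c' $ i = 0}"
      by auto
    ultimately show "CARD('n) - (k + 1) \<le> hamming (monomial_vec P t) c"
      unfolding hamming_eq_card_diff by (simp add: card_Diff_subset)
  qed
qed

text \<open>A word u dual to the monomial of pole order k among those of L(kO) is orthogonal to
  C_L(D, (k-1)O); so is u - c for every c \<in> C_Omega(D, kO), which is nonzero and therefore
  has weight at least k - 1.\<close>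
lemma covering_radius_code_Omega_ge:
  fixes P :: "'n::finite \<Rightarrow> 'a::{field,finite} \<times> 'a"
  assumes "elliptic W" "inj P" "\<forall>i. on_curve W (P i)" "2 \<le> k" "k < CARD('n)"
  shows "k - 1 \<le> covering_radius (code_Omega P k)"
proof -
  define t where "t = top_monomial k"
  have t: "t \<in> LkO_monomials k" "t \<notin> LkO_monomials (k - 1)"
    using top_monomial_in[of k] top_monomial_notin[of k] assms(4) by (auto simp: t_def)
  note indep = monomial_vecs_independent[OF assms(2,3,5)]
  obtain u where u: "\<And>s. s \<in> monomial_vec P ` LkO_monomials k \<Longrightarrow>
      dot u s = (if s = monomial_vec P t then 1 else 0)"
    using exists_dual_vector[OF indep(2) imageI[OF t(1)]] by metis
  have u_lower: "dot u (monomial_vec P m) = 0" if "m \<in> LkO_monomials (k - 1)" for m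
  proof -
    have m: "m \<in> LkO_monomials k" using that LkO_monomials_mono[of "k - 1" k] by auto
    moreover have "m \<noteq> t" using that t(2) by auto
    then have "monomial_vec P m \<noteq> monomial_vec P t" using indep(1) m t(1) by (meson inj_onD)
    then show ?thesis using u[OF imageI[OF m]] by simp
  qed
  have "\<forall>c\<in>code_Omega P k. k - 1 \<le> hamming u c"
  proof
    fix c assume "c \<in> code_Omega P k"
    then have c: "\<forall>v\<in>code_L P k. dot c v = 0" by (simp add: code_Omega_def dual_code_def)
    have orth: "\<forall>v\<in>code_L P (k - 1). dot (u - c) v = 0"
    proof
      fix v assume v: "v \<in> code_L P (k - 1)"
      then obtain c0 where "v = eval_vec P (k - 1) c0" by (auto simp: code_L_eq_range)
      then have "dot u v = 0" by (simp add: dot_eval_vec u_lower)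
      moreover have "dot c v = 0" using c v code_L_mono[of "k - 1" k P] by auto
      ultimately show "dot (u - c) v = 0" by (simp add: dot_diff_left)
    qed
    have "dot (u - c) (monomial_vec P t) = 1"
      using u[OF imageI[OF t(1)]] c monomial_vec_in_code_L[OF t(1), of P] by (simp add: dot_diff_left)
    then have "u - c \<noteq> 0" by (auto simp: dot_def)
    then have "k - 1 \<le> card {i. (u - c) $ i \<noteq> 0}"
      by (intro dual_weight_ge[OF assms(1-3) _ _ orth]) (use assms(5) in simp_all)
    then show "k - 1 \<le> hamming u c" by (simp add: hamming_eq_card_diff)
  qed
  moreover have "0 \<in> code_Omega P k" by (simp add: code_Omega_def dual_code_def dot_def)
  ultimately show ?thesis by (intro covering_radius_ge) auto
qed

theorem lemma3p1:
  fixes W :: "'a::{field,finite} weierstrass"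
    and P :: "'n::finite \<Rightarrow> 'a \<times> 'a"
    and k :: nat
    and C :: "('a ^ 'n) set"
  assumes "odd CARD('a)"
    and "elliptic W"
    and "inj P"
    and "\<forall>i. on_curve W (P i)"
    and "2 \<le> k" and "k + 2 \<le> CARD('n)"
    and "C = code_Omega P k \<or> C = code_L P k"
  shows "int (covering_radius C) = int CARD('n) - int (vec.dim C) - 1
       \<or> int (covering_radius C) = int CARD('n) - int (vec.dim C)"
proof -
  have "vec.subspace C" using assms(7) subspace_code_Omega subspace_code_L by metis
  then have upper: "covering_radius C \<le> CARD('n) - vec.dim C"
    by (rule covering_radius_le_codim)
  have "vec.dim C \<le> CARD('n)" by (rule dim_subset_UNIV_cart_gen)
  moreover have "int CARD('n) - int (vec.dim C) - 1 \<le> int (covering_radius C)"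
    using assms(7)
  proof
    assume C: "C = code_Omega P k"
    have "k - 1 \<le> covering_radius C"
      unfolding C using assms(6) by (intro covering_radius_code_Omega_ge[OF assms(2-5)]) simp
    moreover have "CARD('n) \<le> vec.dim C + k"
      unfolding C using assms(5) by (intro dim_code_Omega_ge) simp
    ultimately show ?thesis using assms(5) by linarith
  next
    assume C: "C = code_L P k"
    have "CARD('n) - (k + 1) \<le> covering_radius C"
      unfolding C by (rule covering_radius_code_L_ge[OF assms(3-5)])
    moreover have "k \<le> vec.dim C"
      unfolding C using assms(5,6) by (intro dim_code_L_ge[OF assms(3,4)]) simp_all
    ultimately show ?thesis using assms(6) by linarith
  qed
  ultimately show ?thesis using upper by linarith
qed

end
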